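(* Let $H$ be a graded, connected Hopf algebra over $K$ with a symmetric, non-degenerate Hopf pairing $\langle-,-\rangle$ on $H\times H$, and let $\mathfrak g=\mathrm{Prim}(H)$. Fix $n\in\mathbb N$. Let $\mathfrak h_n$ be a complement of $(\mathfrak g\cap H^{+2})_n$ in $\mathfrak g_n$ and $m_n$ a complement of $(\mathfrak g\cap H^{+2})_n$ in $(H^{+2})_n$. Then $\mathfrak h_n$ is non-isotropic (the restriction of the pairing to $\mathfrak h_n\times\mathfrak h_n$ is non-degenerate), and there exists a complement $w_n$ of $\mathfrak g_n+(H^{+2})_n$ in $H_n$ such that, with orthogonals taken inside $H_n$: (i) $w_n^\perp=w_n\oplus\mathfrak h_n\oplus m_n$ and the restriction of the pairing to $(\mathfrak g\cap H^{+2})_n\times w_n$ is non-degenerate; (ii) $\mathfrak h_n^\perp=(\mathfrak g\cap H^{+2})_n\oplus m_n\oplus w_n$ and the restriction to $\mathfrak h_n\times\mathfrak h_n$ is non-degenerate; (iii) $m_n^\perp=(\mathfrak g\cap H^{+2})_n\oplus\mathfrak h_n\oplus w_n$ and the restriction to $m_n\times m_n$ is non-degenerate; (iv) $((\mathfrak g\cap H^{+2})_n)^\perp=(\mathfrak g\cap H^{+2})_n\oplus m_n\oplus\mathfrak h_n$ and the restriction to $w_n\times(\mathfrak g\cap H^{+2})_n$ is non-degenerate.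
   Context: $K$ is a commutative field of characteristic $\neq2$. A graded connected Hopf algebra is a Hopf algebra $H=\bigoplus_{n\ge0}H_n$ over $K$ with homogeneous structure maps, $H_0=K$ and every $H_n$ finite-dimensional. $H^+=\bigoplus_{n\ge1}H_n$, $H^{+2}$ is the span of products of two elements of $H^+$, $\mathfrak g_n=\mathfrak g\cap H_n$. A Hopf pairing on $H\times H$ is a bilinear form with $\langle x,1\rangle=\varepsilon(x)=\langle1,x\rangle$, $\langle xy,z\rangle=\langle x\otimes y,\Delta(z)\rangle$, $\langle x,yz\rangle=\langle\Delta(x),y\otimes z\rangle$, and $\langle H_i,H_j\rangle=0$ for $i\ne j$. *)

theory Defs
  imports Main "HOL.Vector_Spaces"
begin

text \<open>The ground field is a type 'k of class field; the Hopf
algebra H is the whole type 'h (an abelian group) with scalar multiplication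
scale, forming a K-vector space.  Elements of H (x) H are represented by finite
lists of pairs (a,b), standing for the sum of the a (x) b; two such lists
represent the same tensor iff every K-bilinear form takes the same value on
them (bilinear forms separate the points of the algebraic tensor product).
Likewise for H (x) H (x) H with trilinear forms.\<close>

definition bilinear_form :: "('k::field \<Rightarrow> 'h::ab_group_add \<Rightarrow> 'h) \<Rightarrow> ('h \<Rightarrow> 'h \<Rightarrow> 'k) \<Rightarrow> bool" where
  "bilinear_form scale \<beta> \<longleftrightarrow>
     (\<forall>x. Vector_Spaces.linear scale (*) (\<beta> x)) \<and> (\<forall>y. Vector_Spaces.linear scale (*) (\<lambda>x. \<beta> x y))"

definition trilinear_form :: "('k::field \<Rightarrow> 'h::ab_group_add \<Rightarrow> 'h) \<Rightarrow> ('h \<Rightarrow> 'h \<Rightarrow> 'h \<Rightarrow> 'k) \<Rightarrow> bool" where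
  "trilinear_form scale \<gamma> \<longleftrightarrow>
     (\<forall>x y. Vector_Spaces.linear scale (*) (\<gamma> x y)) \<and>
     (\<forall>x z. Vector_Spaces.linear scale (*) (\<lambda>y. \<gamma> x y z)) \<and>
     (\<forall>y z. Vector_Spaces.linear scale (*) (\<lambda>x. \<gamma> x y z))"

definition tens_eval :: "('h \<Rightarrow> 'h \<Rightarrow> 'c::comm_monoid_add) \<Rightarrow> ('h \<times> 'h) list \<Rightarrow> 'c" where
  "tens_eval \<beta> l = sum_list (map (\<lambda>(a, b). \<beta> a b) l)"

definition tens3_eval :: "('h \<Rightarrow> 'h \<Rightarrow> 'h \<Rightarrow> 'c::comm_monoid_add) \<Rightarrow> ('h \<times> 'h \<times> 'h) list \<Rightarrow> 'c" where
  "tens3_eval \<gamma> l = sum_list (map (\<lambda>(a, b, c). \<gamma> a b c) l)"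

definition tens_eq :: "('k::field \<Rightarrow> 'h::ab_group_add \<Rightarrow> 'h) \<Rightarrow> ('h \<times> 'h) list \<Rightarrow> ('h \<times> 'h) list \<Rightarrow> bool" where
  "tens_eq scale l1 l2 \<longleftrightarrow>
     (\<forall>\<beta>. bilinear_form scale \<beta> \<longrightarrow> tens_eval \<beta> l1 = tens_eval \<beta> l2)"

definition tens3_eq :: "('k::field \<Rightarrow> 'h::ab_group_add \<Rightarrow> 'h) \<Rightarrow> ('h \<times> 'h \<times> 'h) list \<Rightarrow> ('h \<times> 'h \<times> 'h) list \<Rightarrow> bool" where
  "tens3_eq scale l1 l2 \<longleftrightarrow>
     (\<forall>\<gamma>. trilinear_form scale \<gamma> \<longrightarrow> tens3_eval \<gamma> l1 = tens3_eval \<gamma> l2)"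

definition graded_connected_hopf ::
  "('k::field \<Rightarrow> 'h::ab_group_add \<Rightarrow> 'h) \<Rightarrow> (nat \<Rightarrow> 'h set) \<Rightarrow> ('h \<Rightarrow> 'h \<Rightarrow> 'h) \<Rightarrow> 'h
    \<Rightarrow> ('h \<Rightarrow> ('h \<times> 'h) list) \<Rightarrow> ('h \<Rightarrow> 'k) \<Rightarrow> bool" where
  "graded_connected_hopf scale Hn mult one Delta eps \<longleftrightarrow>
     \<comment> \<open>vector space, grading\<close>
     vector_space scale \<and>
     (\<forall>i. module.subspace scale (Hn i)) \<and>
     (\<forall>i. \<exists>B. finite B \<and> Hn i = module.span scale B) \<and>
     (\<forall>x. \<exists>N f. (\<forall>i. f i \<in> Hn i) \<and> x = (\<Sum>i<N. f i)) \<and>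
     (\<forall>N f. (\<forall>i<N. f i \<in> Hn i) \<longrightarrow> (\<Sum>i<N. f i) = 0 \<longrightarrow> (\<forall>i<N. f i = 0)) \<and>
     \<comment> \<open>connected\<close>
     one \<noteq> 0 \<and> Hn 0 = range (\<lambda>c. scale c one) \<and>
     \<comment> \<open>algebra\<close>
     (\<forall>x y z. mult (x + y) z = mult x z + mult y z) \<and>
     (\<forall>x y z. mult x (y + z) = mult x y + mult x z) \<and>
     (\<forall>c x y. mult (scale c x) y = scale c (mult x y)) \<and>
     (\<forall>c x y. mult x (scale c y) = scale c (mult x y)) \<and>
     (\<forall>x y z. mult (mult x y) z = mult x (mult y z)) \<and>
     (\<forall>x. mult one x = x \<and> mult x one = x) \<and>
     (\<forall>i j x y. x \<in> Hn i \<longrightarrow> y \<in> Hn j \<longrightarrow> mult x y \<in> Hn (i + j)) \<and>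
     \<comment> \<open>coalgebra\<close>
     Vector_Spaces.linear scale (*) eps \<and>
     (\<forall>x y. tens_eq scale (Delta (x + y)) (Delta x @ Delta y)) \<and>
     (\<forall>c x. tens_eq scale (Delta (scale c x)) (map (\<lambda>(a, b). (scale c a, b)) (Delta x))) \<and>
     (\<forall>z. tens3_eq scale
            (concat (map (\<lambda>(a, b). map (\<lambda>(c, d). (c, d, b)) (Delta a)) (Delta z)))
            (concat (map (\<lambda>(a, b). map (\<lambda>(c, d). (a, c, d)) (Delta b)) (Delta z)))) \<and>
     (\<forall>z. sum_list (map (\<lambda>(a, b). scale (eps a) b) (Delta z)) = z) \<and>
     (\<forall>z. sum_list (map (\<lambda>(a, b). scale (eps b) a) (Delta z)) = z) \<and>
     (\<forall>n z. z \<in> Hn n \<longrightarrow> (\<exists>l. tens_eq scale (Delta z) l \<and>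
            (\<forall>(a, b) \<in> set l. \<exists>i j. i + j = n \<and> a \<in> Hn i \<and> b \<in> Hn j))) \<and>
     (\<forall>n z. n \<noteq> 0 \<longrightarrow> z \<in> Hn n \<longrightarrow> eps z = 0) \<and>
     \<comment> \<open>bialgebra compatibility\<close>
     (\<forall>x y. tens_eq scale (Delta (mult x y))
            (concat (map (\<lambda>(a, b). map (\<lambda>(c, d). (mult a c, mult b d)) (Delta y)) (Delta x)))) \<and>
     tens_eq scale (Delta one) [(one, one)] \<and>
     (\<forall>x y. eps (mult x y) = eps x * eps y) \<and> eps one = 1 \<and>
     \<comment> \<open>antipode\<close>
     (\<exists>S. Vector_Spaces.linear scale scale S \<and> (\<forall>n. S ` Hn n \<subseteq> Hn n) \<and>
        (\<forall>z. sum_list (map (\<lambda>(a, b). mult (S a) b) (Delta z)) = scale (eps z) one) \<and>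
        (\<forall>z. sum_list (map (\<lambda>(a, b). mult a (S b)) (Delta z)) = scale (eps z) one))"

definition hopf_pairing ::
  "('k::field \<Rightarrow> 'h::ab_group_add \<Rightarrow> 'h) \<Rightarrow> (nat \<Rightarrow> 'h set) \<Rightarrow> ('h \<Rightarrow> 'h \<Rightarrow> 'h) \<Rightarrow> 'h
    \<Rightarrow> ('h \<Rightarrow> ('h \<times> 'h) list) \<Rightarrow> ('h \<Rightarrow> 'k) \<Rightarrow> ('h \<Rightarrow> 'h \<Rightarrow> 'k) \<Rightarrow> bool" where
  "hopf_pairing scale Hn mult one Delta eps pair \<longleftrightarrow>
     bilinear_form scale pair \<and>
     (\<forall>x. pair x one = eps x \<and> pair one x = eps x) \<and>
     (\<forall>x y z. pair (mult x y) z = tens_eval (\<lambda>a b. pair x a * pair y b) (Delta z)) \<and>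
     (\<forall>x y z. pair x (mult y z) = tens_eval (\<lambda>a b. pair a y * pair b z) (Delta x)) \<and>
     (\<forall>i j x y. i \<noteq> j \<longrightarrow> x \<in> Hn i \<longrightarrow> y \<in> Hn j \<longrightarrow> pair x y = 0)"

definition symmetric_form :: "('h \<Rightarrow> 'h \<Rightarrow> 'k) \<Rightarrow> bool" where
  "symmetric_form pair \<longleftrightarrow> (\<forall>x y. pair x y = pair y x)"

definition nondegenerate_form :: "('h::zero \<Rightarrow> 'h \<Rightarrow> 'k::zero) \<Rightarrow> bool" where
  "nondegenerate_form pair \<longleftrightarrow>
     (\<forall>x. (\<forall>y. pair x y = 0) \<longrightarrow> x = 0) \<and> (\<forall>y. (\<forall>x. pair x y = 0) \<longrightarrow> y = 0)"

definition nondeg_on :: "('h::zero \<Rightarrow> 'h \<Rightarrow> 'k::zero) \<Rightarrow> 'h set \<Rightarrow> 'h set \<Rightarrow> bool" where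
  "nondeg_on pair A B \<longleftrightarrow>
     (\<forall>a\<in>A. (\<forall>b\<in>B. pair a b = 0) \<longrightarrow> a = 0) \<and> (\<forall>b\<in>B. (\<forall>a\<in>A. pair a b = 0) \<longrightarrow> b = 0)"

definition primitives :: "('k::field \<Rightarrow> 'h::ab_group_add \<Rightarrow> 'h) \<Rightarrow> 'h \<Rightarrow> ('h \<Rightarrow> ('h \<times> 'h) list) \<Rightarrow> 'h set" where
  "primitives scale one Delta = {x. tens_eq scale (Delta x) [(x, one), (one, x)]}"

definition Hplus :: "('k::field \<Rightarrow> 'h::ab_group_add \<Rightarrow> 'h) \<Rightarrow> (nat \<Rightarrow> 'h set) \<Rightarrow> 'h set" where
  "Hplus scale Hn = module.span scale (\<Union>i\<in>{1..}. Hn i)"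

definition Hplus2 :: "('k::field \<Rightarrow> 'h::ab_group_add \<Rightarrow> 'h) \<Rightarrow> (nat \<Rightarrow> 'h set) \<Rightarrow> ('h \<Rightarrow> 'h \<Rightarrow> 'h) \<Rightarrow> 'h set" where
  "Hplus2 scale Hn mult =
     module.span scale {mult x y | x y. x \<in> Hplus scale Hn \<and> y \<in> Hplus scale Hn}"

definition sum2 :: "'h::ab_group_add set \<Rightarrow> 'h set \<Rightarrow> 'h set" where
  "sum2 A B = {a + b | a b. a \<in> A \<and> b \<in> B}"

definition sum3 :: "'h::ab_group_add set \<Rightarrow> 'h set \<Rightarrow> 'h set \<Rightarrow> 'h set" where
  "sum3 A B C = {a + b + c | a b c. a \<in> A \<and> b \<in> B \<and> c \<in> C}"

definition direct3 :: "'h::ab_group_add set \<Rightarrow> 'h set \<Rightarrow> 'h set \<Rightarrow> bool" where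
  "direct3 A B C \<longleftrightarrow>
     (\<forall>a\<in>A. \<forall>b\<in>B. \<forall>c\<in>C. a + b + c = 0 \<longrightarrow> a = 0 \<and> b = 0 \<and> c = 0)"

definition is_complement :: "('k::field \<Rightarrow> 'h::ab_group_add \<Rightarrow> 'h) \<Rightarrow> 'h set \<Rightarrow> 'h set \<Rightarrow> 'h set \<Rightarrow> bool" where
  "is_complement scale C A V \<longleftrightarrow>
     module.subspace scale C \<and> C \<subseteq> V \<and> A \<inter> C = {0} \<and> sum2 A C = V"

definition orth_in :: "('h \<Rightarrow> 'h \<Rightarrow> 'k::zero) \<Rightarrow> 'h set \<Rightarrow> 'h set \<Rightarrow> 'h set" where
  "orth_in pair V S = {x \<in> V. \<forall>y\<in>S. pair y x = 0}"

end

theory Submission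
  imports Defs "HOL-Library.Set_Algebras"
begin

text \<open>In each degree n \<ge> 1 the pairing is a nondegenerate symmetric form on the
finite-dimensional space H_n, and the Hopf axioms make the primitives g_n exactly the
orthogonal of (H^{+2})_n: for primitive p and x, y \<in> H^+ one has
\<langle>xy, p\<rangle> = \<langle>x, p\<rangle>\<epsilon>(y) + \<epsilon>(x)\<langle>y, p\<rangle> = 0, and conversely an element orthogonal to
(H^{+2})_n satisfies this derivation rule, which by nondegeneracy forces its coproduct to be
x \<otimes> 1 + 1 \<otimes> x, since products of pairings separate tensors.

What remains is linear algebra for subspaces P, Q with P = orth Q of a nondegenerate symmetric
space V.  Then P \<inter> Q is totally isotropic with orthogonal P + Q, and the complements h of
P \<inter> Q in P and m of P \<inter> Q in Q are nondegenerate.  A complement w of P + Q is an isotropic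
dual of P \<inter> Q orthogonal to h + m: a dual family of a basis of P \<inter> Q, corrected by half
of its Gram matrix (this is where char K \<noteq> 2 enters).  In V = (P \<inter> Q) \<oplus> h \<oplus> m \<oplus> w the
form pairs P \<inter> Q with w and h, m with themselves and is zero on all other pairs of
blocks, and the four orthogonality statements are read off from this.\<close>

lemma sum2_eq_set_plus: "sum2 A B = A + B"
  by (auto simp: sum2_def set_plus_def)

lemma sum3_eq_set_plus: "sum3 A B C = A + B + C"
  by (auto simp: sum3_def set_plus_def)

context vector_space
begin

lemma subspace_set_plus: "subspace A \<Longrightarrow> subspace B \<Longrightarrow> subspace (A + B)"
  using subspace_sums[of A B] by (simp add: sum2_eq_set_plus[unfolded sum2_def])

lemma subspace_set_plus_self: "subspace A \<Longrightarrow> A + A = A"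
  by (auto simp: set_plus_def subspace_add) (metis add.right_neutral subspace_0)

lemma set_plus_subset_subspace: "subspace V \<Longrightarrow> A \<subseteq> V \<Longrightarrow> B \<subseteq> V \<Longrightarrow> A + B \<subseteq> V"
  by (auto simp: set_plus_def) (meson subsetD subspace_add)

lemma independent_coefficients_eq_0:
  assumes "finite T" "independent T" "(\<Sum>t\<in>T. u t *s t) = 0" "t \<in> T"
  shows "u t = 0"
  using assms dependent_finite by blast

lemma linear_inj_on_span_imp_surj_on:
  assumes f: "Vector_Spaces.linear scale scale f" and T: "finite T" "independent T"
    and fT: "f ` T \<subseteq> span T" and inj: "inj_on f (span T)"
  shows "span T \<subseteq> f ` span T"
proof -
  interpret f: Vector_Spaces.linear scale scale f by (rule f)
  have indep: "independent (f ` T)"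
    using f.independent_injective_image[OF T(2) inj] .
  have card: "card (f ` T) = card T"
    using card_image inj_on_subset[OF inj span_superset] by blast
  have "span T \<subseteq> span (f ` T)"
  proof
    fix v assume v: "v \<in> span T"
    show "v \<in> span (f ` T)"
    proof (rule ccontr)
      assume nv: "v \<notin> span (f ` T)"
      then have "independent (insert v (f ` T))" using indep independent_insertI by blast
      then have "card (insert v (f ` T)) \<le> card T"
        using independent_span_bound[OF T(1)] v fT by blast
      moreover have "v \<notin> f ` T" using nv span_base by blast
      ultimately show False using card T(1) by simp
    qed
  qed
  then show ?thesis by (simp add: f.span_image)
qed

lemma inter_plus_complements_eq_0:
  assumes Q: "subspace Q"
    and C: "is_complement scale C (P \<inter> Q) P" and D: "is_complement scale D (P \<inter> Q) Q"
  shows "P \<inter> Q \<inter> (C + D) = {0}"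
proof (intro equalityI subsetI)
  fix a assume "a \<in> P \<inter> Q \<inter> (C + D)"
  then obtain c d where a: "a \<in> P \<inter> Q" "c \<in> C" "d \<in> D" "a = c + d" by (auto elim: set_plus_elim)
  then have "c \<in> Q" using D subspace_diff[OF Q, of a d] by (auto simp: is_complement_def)
  then have "c = 0" using a(2) C by (auto simp: is_complement_def)
  then show "a \<in> {0}" using a D by (auto simp: is_complement_def)
next
  show "x \<in> {0} \<Longrightarrow> x \<in> P \<inter> Q \<inter> (C + D)" for x
    using C D set_plus_intro[of 0 C 0 D] by (auto simp: is_complement_def subspace_0)
qed

lemma plus_eq_inter_plus_complements:
  assumes "subspace P" "subspace Q"
    and C: "is_complement scale C (P \<inter> Q) P" and D: "is_complement scale D (P \<inter> Q) Q"
  shows "P + Q = P \<inter> Q + C + D"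
proof -
  have "P = P \<inter> Q + C" "Q = P \<inter> Q + D"
    using C D by (simp_all add: is_complement_def sum2_eq_set_plus)
  then have "P + Q = (P \<inter> Q + C) + (P \<inter> Q + D)" by (rule arg_cong2)
  also have "\<dots> = (P \<inter> Q + P \<inter> Q) + C + D" by (simp add: ac_simps)
  finally have "P + Q = (P \<inter> Q + P \<inter> Q) + C + D" .
  then show ?thesis using subspace_set_plus_self[OF subspace_inter[OF assms(1,2)]] by simp
qed

end

section \<open>Nondegenerate symmetric forms on a finite-dimensional space\<close>

locale bilinear_space = vector_space scale
  for scale :: "'a::field \<Rightarrow> 'b::ab_group_add \<Rightarrow> 'b" (infixr \<open>*s\<close> 75) +
  fixes B :: "'b \<Rightarrow> 'b \<Rightarrow> 'a"
  assumes bilinear: "bilinear_form scale B"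
begin

sublocale left: Vector_Spaces.linear scale "(*)" "\<lambda>x. B x y" for y
  using bilinear by (simp add: bilinear_form_def)

sublocale right: Vector_Spaces.linear scale "(*)" "B x" for x
  using bilinear by (simp add: bilinear_form_def)

lemmas B_simps = left.add left.scale left.neg left.diff left.sum left.zero
  right.add right.scale right.neg right.diff right.sum right.zero

end

locale symmetric_form_space = bilinear_space scale B
  for scale :: "'a::field \<Rightarrow> 'b::ab_group_add \<Rightarrow> 'b" (infixr \<open>*s\<close> 75) and B +
  fixes V :: "'b set"
  assumes symmetric: "B x y = B y x"
    and finite_span: "\<exists>E. finite E \<and> V = span E"
    and nondegenerate: "x \<in> V \<Longrightarrow> (\<forall>y\<in>V. B y x = 0) \<Longrightarrow> x = 0"
begin

lemma subspace_V: "subspace V"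
  using finite_span by auto

lemma finite_independent_V: "independent T \<Longrightarrow> T \<subseteq> V \<Longrightarrow> finite T"
  using finite_span independent_span_bound by blast

definition perp :: "'b set \<Rightarrow> 'b set \<Rightarrow> bool" where
  "perp X Y \<longleftrightarrow> (\<forall>x\<in>X. \<forall>y\<in>Y. B x y = 0)"

abbreviation orth :: "'b set \<Rightarrow> 'b set" where
  "orth S \<equiv> orth_in B V S"

lemma perp_commute: "perp X Y \<longleftrightarrow> perp Y X"
  unfolding perp_def by (metis symmetric)

lemma perp_mono: "perp X Y \<Longrightarrow> X' \<subseteq> X \<Longrightarrow> Y' \<subseteq> Y \<Longrightarrow> perp X' Y'"
  by (auto simp: perp_def)

lemma perp_span_left: "perp X Y \<Longrightarrow> perp (span X) Y"
  unfolding perp_def using left.eq_0_on_span by blast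

lemma perp_span_right: "perp X Y \<Longrightarrow> perp X (span Y)"
  using perp_span_left perp_commute by blast

lemma perp_plus_right: "perp X Y \<Longrightarrow> perp X Z \<Longrightarrow> perp X (Y + Z)"
  by (auto simp: perp_def set_plus_def B_simps)

lemma orth_iff: "y \<in> orth X \<longleftrightarrow> y \<in> V \<and> perp X {y}"
  by (simp add: orth_in_def perp_def)

lemma subspace_orth: "subspace (orth S)"
  using subspace_V by (auto simp: subspace_def orth_in_def B_simps)

lemma orth_subset_V: "orth S \<subseteq> V"
  by (auto simp: orth_in_def)

lemma perp_orth: "perp S (orth S)"
  by (auto simp: orth_in_def perp_def)

lemma exists_dual_vector_of_basis:
  assumes T: "finite T" "independent T" "span T = V"
  shows "\<exists>w\<in>V. \<forall>t\<in>T. B t w = c t"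
proof -
  define \<Phi> where "\<Phi> v = (\<Sum>t\<in>T. B t v *s t)" for v
  have lin: "Vector_Spaces.linear scale scale \<Phi>"
    unfolding Vector_Spaces.linear_iff \<Phi>_def
    by (simp add: vector_space_axioms B_simps scale_left_distrib sum.distrib scale_sum_right)
  have coefficients: "B t v = B t v'" if "\<Phi> v = \<Phi> v'" "t \<in> T" for v v' t
    using independent_coefficients_eq_0[OF T(1,2), of "\<lambda>t. B t v - B t v'"] that
    by (simp add: \<Phi>_def scale_left_diff_distrib sum_subtractf)
  have "inj_on \<Phi> V"
  proof (rule inj_onI)
    fix v v' assume "v \<in> V" "v' \<in> V" "\<Phi> v = \<Phi> v'"
    then have "perp T {v - v'}" using coefficients[of v v'] by (simp add: perp_def B_simps)
    then have "perp V {v - v'}" using perp_span_left T(3) by blast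
    then show "v = v'"
      using nondegenerate[of "v - v'"] \<open>v \<in> V\<close> \<open>v' \<in> V\<close> subspace_V
      by (simp add: perp_def subspace_diff)
  qed
  moreover have "\<Phi> ` T \<subseteq> span T"
    unfolding \<Phi>_def by (auto intro: span_sum span_scale span_base)
  ultimately have "V \<subseteq> \<Phi> ` V"
    using linear_inj_on_span_imp_surj_on[OF lin T(1,2)] T(3) by blast
  moreover have "(\<Sum>t\<in>T. c t *s t) \<in> V"
    unfolding T(3)[symmetric] by (intro span_sum span_scale span_base)
  ultimately have "(\<Sum>t\<in>T. c t *s t) \<in> \<Phi> ` V" by blast
  then obtain w where "w \<in> V" "\<Phi> w = (\<Sum>t\<in>T. c t *s t)" by (metis imageE)
  moreover from this have "B t w = c t" if "t \<in> T" for t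
    using independent_coefficients_eq_0[OF T(1,2), of "\<lambda>t. B t w - c t"] that
    by (simp add: \<Phi>_def scale_left_diff_distrib sum_subtractf)
  ultimately show ?thesis by blast
qed

lemma exists_dual_vector:
  assumes "independent T" "T \<subseteq> V"
  shows "\<exists>w\<in>V. \<forall>t\<in>T. B t w = c t"
proof -
  obtain T' where T': "T \<subseteq> T'" "T' \<subseteq> V" "independent T'" "V \<subseteq> span T'"
    using maximal_independent_subset_extend[OF assms(2,1)] by blast
  have "span T' = V" using T' span_minimal[OF T'(2) subspace_V] by auto
  then show ?thesis
    using exists_dual_vector_of_basis[OF finite_independent_V[OF T'(3,2)] T'(3)] T'(1) by blast
qed

lemma exists_separating_vector:
  assumes S: "subspace S" "S \<subseteq> V" and x: "x \<in> V" "x \<notin> S"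
  shows "\<exists>w\<in>V. perp S {w} \<and> B x w = 1"
proof -
  obtain T where T: "T \<subseteq> S" "independent T" "S \<subseteq> span T"
    using maximal_independent_subset[of S] by blast
  have "x \<notin> span T" using x span_minimal[OF T(1) S(1)] by blast
  then have "independent (insert x T)" using T independent_insertI by blast
  moreover have "insert x T \<subseteq> V" using T(1) S(2) x(1) by blast
  ultimately obtain w where w: "w \<in> V" "\<forall>t\<in>insert x T. B t w = (if t = x then 1 else 0)"
    using exists_dual_vector[of "insert x T" "\<lambda>t. if t = x then 1 else 0"] by blast
  have "x \<notin> T" using \<open>x \<notin> span T\<close> span_base by blast
  then have "perp T {w}" using w(2) by (auto simp: perp_def)
  then have "perp S {w}" using perp_mono[OF perp_span_left T(3) order_refl] by blast
  then show ?thesis using w by auto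
qed

lemma orth_orth:
  assumes S: "subspace S" "S \<subseteq> V"
  shows "orth (orth S) = S"
proof (intro equalityI subsetI)
  fix x assume x: "x \<in> orth (orth S)"
  show "x \<in> S"
  proof (rule ccontr)
    assume "x \<notin> S"
    moreover have "x \<in> V" using x orth_subset_V by blast
    ultimately obtain w where w: "w \<in> V" "perp S {w}" "B x w = 1"
      using exists_separating_vector[OF S] by blast
    then have "w \<in> orth S" by (simp add: orth_iff)
    then have "B w x = 0" using x by (auto simp: orth_in_def)
    then show False using w(3) symmetric[of w x] by simp
  qed
next
  fix x assume "x \<in> S"
  moreover have "perp (orth S) S" using perp_commute[THEN iffD1, OF perp_orth[of S]] .
  ultimately show "x \<in> orth (orth S)" using S(2) unfolding orth_iff perp_def by blast
qed

lemma orth_eq_of_plus: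
  assumes V: "V = X + Y" "0 \<in> X" and Z: "perp Z Y" "nondeg_on B Z X"
  shows "orth Z = Y"
proof (intro equalityI subsetI)
  fix v assume v: "v \<in> orth Z"
  then obtain x y where xy: "v = x + y" "x \<in> X" "y \<in> Y"
    using V(1) orth_subset_V by (blast elim: set_plus_elim)
  have "B z x = 0" if "z \<in> Z" for z
    using that v Z(1) xy by (simp add: orth_iff perp_def B_simps)
  then have "x = 0" using Z(2) xy(2) by (simp add: nondeg_on_def)
  then show "v \<in> Y" using xy by simp
next
  have "Y \<subseteq> V" using set_zero_plus2[OF V(2), of Y] V(1) by simp
  then show "y \<in> Y \<Longrightarrow> y \<in> orth Z" for y
    using Z(1) by (auto simp: orth_iff perp_def)
qed

lemma biorthogonal_expansion:
  assumes T: "finite T" and ef: "\<forall>p\<in>T. \<forall>q\<in>T. B (e p) (f q) = (if p = q then 1 else 0)"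
    and x: "x \<in> span (f ` T)"
  shows "x = (\<Sum>p\<in>T. B (e p) x *s f p)"
  using x
proof (induction rule: span_induct)
  case base
  let ?expansion = "\<lambda>x. (\<Sum>p\<in>T. B (e p) x *s f p)"
  have zero: "0 = ?expansion 0" by (simp add: B_simps)
  have add: "x + y = ?expansion (x + y)" if "x = ?expansion x" "y = ?expansion y" for x y
  proof -
    from that have "x + y = ?expansion x + ?expansion y" by (rule arg_cong2)
    also have "\<dots> = ?expansion (x + y)"
      by (simp add: B_simps scale_left_distrib sum.distrib)
    finally show ?thesis .
  qed
  have scale: "c *s x = ?expansion (c *s x)" if "x = ?expansion x" for c x
  proof -
    from that have "c *s x = c *s ?expansion x" by (rule arg_cong)
    also have "\<dots> = ?expansion (c *s x)"
      by (simp add: B_simps scale_sum_right)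
    finally show ?thesis .
  qed
  show ?case
    unfolding subspace_def Ball_def mem_Collect_eq
    by (intro conjI allI impI; (rule zero | rule add | rule scale); assumption)
next
  case (step y)
  then obtain q where q: "q \<in> T" "y = f q" by blast
  then have "(\<Sum>p\<in>T. B (e p) y *s f p) = (\<Sum>p\<in>T. if q = p then f p else 0)"
    using ef by (intro sum.cong) auto
  then show ?case using q T by simp
qed

section \<open>Isotropic duals and the block decomposition\<close>

lemma exists_dual_family:
  assumes T: "independent T" "T \<subseteq> V" and S: "subspace S" "S \<subseteq> V" "span T \<inter> S = {0}"
  shows "\<exists>u. \<forall>p\<in>T. u p \<in> V \<and> perp S {u p} \<and> (\<forall>t\<in>T. B t (u p) = (if t = p then 1 else 0))"
proof -
  have "\<exists>w\<in>V. perp (span (T - {p}) + S) {w} \<and> B p w = 1" if p: "p \<in> T" for p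
  proof (rule exists_separating_vector)
    show "subspace (span (T - {p}) + S)" using S(1) by (simp add: subspace_set_plus)
    have "span (T - {p}) \<subseteq> V" using T(2) span_minimal[OF _ subspace_V] by blast
    then show "span (T - {p}) + S \<subseteq> V" using S(2) set_plus_subset_subspace[OF subspace_V] by blast
    show "p \<in> V" using p T(2) by blast
    show "p \<notin> span (T - {p}) + S"
    proof
      assume "p \<in> span (T - {p}) + S"
      then obtain a s where as: "p = a + s" "a \<in> span (T - {p})" "s \<in> S" by (blast elim: set_plus_elim)
      have "a \<in> span T" using as(2) span_mono[of "T - {p}" T] by blast
      then have "s \<in> span T" using as(1) p span_diff[of p T a] span_base[of p T] by simp
      then have "s = 0" using as(3) S(3) by blast
      then have "p \<in> span (T - {p})" using as(1,2) by simp
      then show False using T(1) p dependent_def by blast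
    qed
  qed
  then obtain u where u: "\<forall>p\<in>T. u p \<in> V \<and> perp (span (T - {p}) + S) {u p} \<and> B p (u p) = 1"
    by metis
  have "perp S {u p}" "B t (u p) = (if t = p then 1 else 0)" if "p \<in> T" "t \<in> T" for p t
  proof -
    have "S \<subseteq> span (T - {p}) + S" using set_zero_plus2[OF span_zero] by blast
    moreover have "T - {p} \<subseteq> span (T - {p}) + S"
      using set_zero_plus2[OF subspace_0[OF S(1)]] span_superset by (metis add.commute order_trans)
    ultimately show "perp S {u p}" "B t (u p) = (if t = p then 1 else 0)"
      using u that by (auto simp: perp_def)
  qed
  then show ?thesis using u by blast
qed

lemma exists_isotropic_dual_family:
  assumes two: "(2::'a) \<noteq> 0" and T: "independent T" "T \<subseteq> V" "perp T T"
    and N: "subspace N" "N \<subseteq> V" "perp T N" "span T \<inter> N = {0}"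
  shows "\<exists>w. \<forall>p\<in>T. w p \<in> V \<and> perp N {w p} \<and> (\<forall>t\<in>T. B t (w p) = (if t = p then 1 else 0)) \<and>
           (\<forall>q\<in>T. B (w p) (w q) = 0)"
proof -
  have fin: "finite T" using finite_independent_V T by blast
  obtain u where u: "\<And>p. p \<in> T \<Longrightarrow> u p \<in> V \<and> perp N {u p}"
    and dual: "\<And>p t. p \<in> T \<Longrightarrow> t \<in> T \<Longrightarrow> B t (u p) = (if t = p then 1 else 0)"
    using exists_dual_family[OF T(1,2) N(1,2,4)] by metis
  define c where "c p = (\<Sum>q\<in>T. B (u p) (u q) *s q)" for p
  \<comment> \<open>subtracting half of the Gram matrix of the dual family u makes it isotropic\<close>
  define w where "w p = u p - (1/2) *s c p" for p
  have c_span: "c p \<in> span T" for p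
    unfolding c_def by (intro span_sum span_scale span_base)
  have span_isotropic: "perp (span T) (span T)" using T(3) perp_span_left perp_span_right by blast
  have N_perp_span: "perp N (span T)" using N(3) perp_span_left perp_commute by blast
  have c_u: "B (c p) (u q) = B (u p) (u q)" if "q \<in> T" for p q
    using that fin by (simp add: c_def B_simps dual if_distrib[of "(*) x" for x] cong: if_cong)
  have u_c: "B (u p) (c q) = B (u p) (u q)" if "p \<in> T" for p q
    using c_u[OF that, of q] symmetric by metis
  have "w p \<in> V" if "p \<in> T" for p
    unfolding w_def using u[OF that] c_span span_minimal[OF T(2) subspace_V] subspace_V
    by (meson subsetD subspace_diff subspace_scale)
  moreover have "perp N {w p}" if "p \<in> T" for p
    using u[OF that] N_perp_span c_span by (auto simp: w_def perp_def B_simps)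
  moreover have "B t (w p) = (if t = p then 1 else 0)" if "p \<in> T" "t \<in> T" for p t
  proof -
    have "B t (c p) = 0" using span_isotropic c_span span_base[OF that(2)] by (simp add: perp_def)
    then show ?thesis using dual[OF that] by (simp add: w_def B_simps)
  qed
  moreover have "B (w p) (w q) = 0" if "p \<in> T" "q \<in> T" for p q
  proof -
    have "B (c p) (c q) = 0" using span_isotropic c_span by (simp add: perp_def)
    then have "B (w p) (w q) = (1 - 1/2 - 1/2) * B (u p) (u q)"
      using c_u[OF that(2)] u_c[OF that(1)] by (simp add: w_def B_simps algebra_simps)
    also have "\<dots> = 0" using two by (simp add: field_simps)
    finally show ?thesis .
  qed
  ultimately show ?thesis by blast
qed

lemma exists_isotropic_dual_subspace:
  assumes two: "(2::'a) \<noteq> 0" and I: "subspace I" "I \<subseteq> V" "perp I I"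
    and N: "subspace N" "N \<subseteq> V" "perp I N" "I \<inter> N = {0}"
  shows "\<exists>W. subspace W \<and> W \<subseteq> V \<and> perp W W \<and> perp N W \<and> nondeg_on B I W \<and> V \<subseteq> orth I + W"
proof -
  obtain T where T: "T \<subseteq> I" "independent T" "I \<subseteq> span T"
    using maximal_independent_subset[of I] by blast
  have span_T: "span T = I" using T span_minimal[OF T(1) I(1)] by blast
  have fin: "finite T" using finite_independent_V T I(2) by blast
  obtain w where w: "\<And>p. p \<in> T \<Longrightarrow> w p \<in> V \<and> perp N {w p} \<and> (\<forall>q\<in>T. B (w p) (w q) = 0)"
    and dual: "\<And>p t. p \<in> T \<Longrightarrow> t \<in> T \<Longrightarrow> B t (w p) = (if t = p then 1 else 0)"
    using exists_isotropic_dual_family[OF two T(2) _ perp_mono[OF I(3) T(1) T(1)] N(1,2)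
        perp_mono[OF N(3) T(1) order_refl]] T(1) I(2) N(4) span_T
    by (metis order_trans)
  define W where "W = span (w ` T)"
  have expansion_W: "x = (\<Sum>p\<in>T. B p x *s w p)" if "x \<in> W" for x
    using biorthogonal_expansion[OF fin, of "\<lambda>p. p" w] dual that by (simp add: W_def)
  have expansion_I: "a = (\<Sum>p\<in>T. B (w p) a *s p)" if "a \<in> I" for a
    using biorthogonal_expansion[OF fin, of w "\<lambda>p. p"] dual symmetric that span_T by simp
  have "w ` T \<subseteq> V" using w by blast
  then have "subspace W" "W \<subseteq> V"
    unfolding W_def using span_minimal[OF _ subspace_V] by auto
  moreover have "perp W W" "perp N W"
  proof -
    have "perp (w ` T) (w ` T)" "perp N (w ` T)" using w by (auto simp: perp_def)
    then show "perp W W" "perp N W" unfolding W_def using perp_span_left perp_span_right by blast+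
  qed
  moreover have "nondeg_on B I W"
  proof (unfold nondeg_on_def, intro conjI ballI impI)
    fix a assume a: "a \<in> I" "\<forall>b\<in>W. B a b = 0"
    then have "B (w p) a = 0" if "p \<in> T" for p
      using that span_base[of "w p" "w ` T"] symmetric by (auto simp: W_def)
    then have "(\<Sum>p\<in>T. B (w p) a *s p) = 0" by simp
    with expansion_I[OF a(1)] show "a = 0" by (rule trans)
  next
    fix b assume b: "b \<in> W" "\<forall>a\<in>I. B a b = 0"
    then have "B p b = 0" if "p \<in> T" for p using that T(1) by blast
    then have "(\<Sum>p\<in>T. B p b *s w p) = 0" by simp
    with expansion_W[OF b(1)] show "b = 0" by (rule trans)
  qed
  moreover have "v \<in> orth I + W" if v: "v \<in> V" for v
  proof -
    define x where "x = (\<Sum>p\<in>T. B p v *s w p)"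
    have "x \<in> W" unfolding x_def W_def by (intro span_sum span_scale span_base) auto
    have "B t (v - x) = 0" if "t \<in> T" for t
      using that fin by (simp add: x_def B_simps dual if_distrib[of "(*) x" for x] cong: if_cong)
    then have "perp I {v - x}" using perp_span_left[of T "{v - x}"] span_T by (simp add: perp_def)
    moreover have "v - x \<in> V" using v \<open>x \<in> W\<close> \<open>W \<subseteq> V\<close> subspace_V subspace_diff by blast
    ultimately have "v - x \<in> orth I" by (simp add: orth_iff)
    then show ?thesis using \<open>x \<in> W\<close> set_plus_intro[of "v - x" "orth I" x W] by simp
  qed
  ultimately show ?thesis by blast
qed

lemma nondeg_on_commute: "nondeg_on B X Y \<longleftrightarrow> nondeg_on B Y X"
  unfolding nondeg_on_def by (intro iffI conjI; metis symmetric)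

lemma orth_set_plus: "0 \<in> X \<Longrightarrow> 0 \<in> Y \<Longrightarrow> orth (X + Y) = orth X \<inter> orth Y"
  by (auto simp: orth_in_def set_plus_def B_simps) force+

lemma orth_inter_eq_plus:
  assumes PQ: "subspace P" "P \<subseteq> V" "subspace Q" "Q \<subseteq> V" "orth Q = P"
  shows "orth (P \<inter> Q) = P + Q"
proof -
  have "orth (P + Q) = P \<inter> Q"
    using orth_set_plus[OF subspace_0[OF PQ(1)] subspace_0[OF PQ(3)]] orth_orth[OF PQ(3,4)] PQ(5)
    by (simp add: Int_commute)
  with orth_orth[OF subspace_set_plus[OF PQ(1,3)] set_plus_subset_subspace[OF subspace_V PQ(2,4)]]
  show ?thesis by simp
qed

lemma nondeg_on_complement_of_inter:
  assumes P: "P \<subseteq> V" "orth P = Q" and C: "is_complement scale C (P \<inter> Q) P"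
  shows "nondeg_on B C C"
proof -
  have "c = 0" if c: "c \<in> C" "\<forall>c'\<in>C. B c' c = 0" for c
  proof -
    have "c \<in> P" using C c(1) by (auto simp: is_complement_def)
    have "B p c = 0" if "p \<in> P" for p
    proof -
      have "p \<in> sum2 (P \<inter> Q) C" using \<open>p \<in> P\<close> C by (simp add: is_complement_def)
      then obtain a c' where "p = a + c'" "a \<in> P \<inter> Q" "c' \<in> C" unfolding sum2_def by blast
      moreover have "B a c = 0" using perp_orth[of P] P(2) \<open>c \<in> P\<close> \<open>a \<in> P \<inter> Q\<close>
        by (auto simp: perp_def symmetric)
      ultimately show ?thesis using c(2) by (simp add: B_simps)
    qed
    then have "c \<in> Q" using P \<open>c \<in> P\<close> by (auto simp: orth_in_def)
    then show "c = 0" using C c(1) \<open>c \<in> P\<close> by (auto simp: is_complement_def)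
  qed
  then show ?thesis unfolding nondeg_on_def by (metis symmetric)
qed

lemma complement_orth_of_dual:
  assumes W: "subspace W" "W \<subseteq> V" "nondeg_on B I W" "V \<subseteq> orth I + W"
  shows "is_complement scale W (orth I) V"
proof -
  have "x = 0" if "x \<in> orth I" "x \<in> W" for x
    using W(3) that by (simp add: nondeg_on_def orth_in_def)
  then have "orth I \<inter> W = {0}" using subspace_0[OF W(1)] subspace_0[OF subspace_orth] by blast
  moreover have "orth I + W = V"
    using W(2,4) set_plus_subset_subspace[OF subspace_V orth_subset_V] by blast
  ultimately show ?thesis using W(1,2) by (simp add: is_complement_def sum2_eq_set_plus)
qed

lemma orthogonal_block_decomposition:
  assumes sub: "subspace pn" "subspace hn" "subspace mn" "subspace wn"
    and V: "V = pn + hn + mn + wn"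
    and perp: "perp pn pn" "perp pn hn" "perp pn mn" "perp hn mn" "perp hn wn" "perp mn wn"
      "perp wn wn"
    and nondeg: "nondeg_on B pn wn" "nondeg_on B hn hn" "nondeg_on B mn mn"
  shows "(orth wn = sum3 wn hn mn \<and> direct3 wn hn mn \<and> nondeg_on B pn wn) \<and>
    (orth hn = sum3 pn mn wn \<and> direct3 pn mn wn \<and> nondeg_on B hn hn) \<and>
    (orth mn = sum3 pn hn wn \<and> direct3 pn hn wn \<and> nondeg_on B mn mn) \<and>
    (orth pn = sum3 pn mn hn \<and> direct3 pn mn hn \<and> nondeg_on B wn pn)"
proof -
  note zero = sub[THEN subspace_0]
  note perp' = perp(2-6)[THEN perp_commute[THEN iffD1]]
  have "orth wn = wn + hn + mn"
    using V zero nondeg_on_commute[THEN iffD1, OF nondeg(1)] perp perp'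
    by (intro orth_eq_of_plus) (auto simp: ac_simps intro!: perp_plus_right)
  moreover have "orth hn = pn + mn + wn"
    using V zero nondeg(2) perp perp'
    by (intro orth_eq_of_plus) (auto simp: ac_simps intro!: perp_plus_right)
  moreover have "orth mn = pn + hn + wn"
    using V zero nondeg(3) perp perp'
    by (intro orth_eq_of_plus) (auto simp: ac_simps intro!: perp_plus_right)
  moreover have "orth pn = pn + mn + hn"
    using V zero nondeg(1) perp perp'
    by (intro orth_eq_of_plus) (auto simp: ac_simps intro!: perp_plus_right)
  moreover have unique: "a = 0 \<and> h = 0 \<and> m = 0 \<and> x = 0"
    if "a \<in> pn" "h \<in> hn" "m \<in> mn" "x \<in> wn" "a + h + m + x = 0" for a h m x
  proof -
    have "B t x = 0" if "t \<in> pn" for t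
      using arg_cong[OF \<open>a + h + m + x = 0\<close>, of "B t"] that perp \<open>a \<in> pn\<close> \<open>h \<in> hn\<close> \<open>m \<in> mn\<close>
      by (simp add: perp_def B_simps)
    then have "x = 0" using nondeg(1) \<open>x \<in> wn\<close> by (simp add: nondeg_on_def)
    have "B t h = 0" if "t \<in> hn" for t
      using arg_cong[OF \<open>a + h + m + x = 0\<close>, of "B t"] that perp perp' \<open>a \<in> pn\<close> \<open>m \<in> mn\<close> \<open>x \<in> wn\<close>
      by (simp add: perp_def B_simps)
    then have "h = 0" using nondeg(2) \<open>h \<in> hn\<close> by (simp add: nondeg_on_def)
    have "B t m = 0" if "t \<in> mn" for t
      using arg_cong[OF \<open>a + h + m + x = 0\<close>, of "B t"] that perp perp' \<open>a \<in> pn\<close> \<open>h \<in> hn\<close> \<open>x \<in> wn\<close>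
      by (simp add: perp_def B_simps)
    then have "m = 0" using nondeg(3) \<open>m \<in> mn\<close> by (simp add: nondeg_on_def)
    show ?thesis using \<open>x = 0\<close> \<open>h = 0\<close> \<open>m = 0\<close> \<open>a + h + m + x = 0\<close> by simp
  qed
  then have "direct3 wn hn mn" "direct3 pn mn wn" "direct3 pn hn wn" "direct3 pn mn hn"
    unfolding direct3_def using zero by (metis add.commute add.left_commute add_0)+
  ultimately show ?thesis
    using nondeg nondeg_on_commute[THEN iffD1, OF nondeg(1)] by (simp add: sum3_eq_set_plus)
qed

theorem exists_complement_orthogonal_decomposition:
  assumes two: "(2::'a) \<noteq> 0"
    and PQ: "subspace P" "P \<subseteq> V" "subspace Q" "Q \<subseteq> V" "orth Q = P"
    and hn: "is_complement scale hn (P \<inter> Q) P"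
    and mn: "is_complement scale mn (P \<inter> Q) Q"
  shows "nondeg_on B hn hn \<and> (\<exists>wn. is_complement scale wn (sum2 P Q) V \<and>
      (let pn = P \<inter> Q in
        (orth wn = sum3 wn hn mn \<and> direct3 wn hn mn \<and> nondeg_on B pn wn) \<and>
        (orth hn = sum3 pn mn wn \<and> direct3 pn mn wn \<and> nondeg_on B hn hn) \<and>
        (orth mn = sum3 pn hn wn \<and> direct3 pn hn wn \<and> nondeg_on B mn mn) \<and>
        (orth pn = sum3 pn mn hn \<and> direct3 pn mn hn \<and> nondeg_on B wn pn)))"
proof -
  define pn where "pn = P \<inter> Q"
  have perp_QP: "perp Q P" using perp_orth[of Q] PQ(5) by simp
  have pn: "subspace pn" "pn \<subseteq> P" "pn \<subseteq> Q" "pn \<subseteq> V"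
    unfolding pn_def using PQ subspace_inter by auto
  have hn': "subspace hn" "hn \<subseteq> P" and mn': "subspace mn" "mn \<subseteq> Q"
    using hn mn by (simp_all add: is_complement_def)
  have perp_pairs: "perp pn pn" "perp pn hn" "perp pn mn" "perp hn mn"
    using perp_QP pn hn'(2) mn'(2) perp_mono perp_commute by meson+
  have "subspace (hn + mn)" "hn + mn \<subseteq> V"
    using hn' mn' PQ(2,4) subspace_set_plus set_plus_subset_subspace[OF subspace_V] by auto
  moreover have "perp pn (hn + mn)" using perp_pairs(2,3) by (rule perp_plus_right)
  moreover have "pn \<inter> (hn + mn) = {0}"
    using inter_plus_complements_eq_0[OF PQ(3) hn mn] by (simp add: pn_def)
  ultimately obtain wn where wn: "subspace wn" "wn \<subseteq> V" "perp wn wn" "perp (hn + mn) wn"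
      "nondeg_on B pn wn" "V \<subseteq> orth pn + wn"
    using exists_isotropic_dual_subspace[OF two pn(1,4) perp_pairs(1)] by meson
  have complement: "is_complement scale wn (sum2 P Q) V"
    using complement_orth_of_dual[OF wn(1,2,5,6)] orth_inter_eq_plus[OF PQ]
    by (simp add: pn_def sum2_eq_set_plus)
  then have V: "V = pn + hn + mn + wn"
    using plus_eq_inter_plus_complements[OF PQ(1,3) hn mn]
    by (simp add: is_complement_def sum2_eq_set_plus pn_def)
  have "hn \<subseteq> hn + mn" "mn \<subseteq> hn + mn"
    using set_zero_plus2[OF subspace_0[OF mn'(1)], of hn] set_zero_plus2[OF subspace_0[OF hn'(1)], of mn]
    by (simp_all add: add.commute)
  then have "perp hn wn" "perp mn wn" using perp_mono[OF wn(4) _ order_refl] by blast+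
  moreover have "nondeg_on B hn hn" "nondeg_on B mn mn"
    using nondeg_on_complement_of_inter[OF PQ(2) orth_orth[OF PQ(3,4), unfolded PQ(5)] hn]
      nondeg_on_complement_of_inter[OF PQ(4) PQ(5)] mn by (simp_all add: Int_commute)
  ultimately show ?thesis
    using orthogonal_block_decomposition[OF pn(1) hn'(1) mn'(1) wn(1) V perp_pairs _ _ wn(3,5)]
      complement unfolding Let_def pn_def[symmetric] by blast
qed

end

section \<open>Products of pairings separate tensors\<close>

lemma bilinear_form_product:
  "bilinear_form s p \<Longrightarrow> bilinear_form s (\<lambda>a b. p x a * p y b)"
  by (simp add: bilinear_form_def Vector_Spaces.linear_iff algebra_simps)

lemma tens_eval_append: "tens_eval \<beta> (l1 @ l2) = tens_eval \<beta> l1 + tens_eval \<beta> l2"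
  by (simp add: tens_eval_def)

lemma tens_eval_conv_sum: "tens_eval \<beta> l = (\<Sum>i<length l. \<beta> (fst (l ! i)) (snd (l ! i)))"
  unfolding tens_eval_def sum_list_sum_nth by (simp add: split_def atLeast0LessThan)

context vector_space
begin

lemma tens_eval_eq_0_of_pairing:
  assumes pair: "bilinear_form scale pair" and nd: "\<And>y. \<forall>x. pair x y = 0 \<Longrightarrow> y = 0"
    and l: "\<And>u v. tens_eval (\<lambda>a b. pair u a * pair v b) l = 0"
    and \<beta>: "bilinear_form scale \<beta>"
  shows "tens_eval \<beta> l = 0"
proof -
  interpret P: bilinear_space scale pair by unfold_locales (rule pair)
  interpret \<beta>: bilinear_space scale \<beta> by unfold_locales (rule \<beta>)
  \<comment> \<open>expanding the left factors in a basis T writes the tensor as \<Sum>e \<otimes> c e, and pairing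
    against all u, v forces every c e to vanish\<close>
  define I where "I = {..<length l}"
  define a where "a i = fst (l ! i)" for i
  define b where "b i = snd (l ! i)" for i
  have eval: "tens_eval \<gamma> l = (\<Sum>i\<in>I. \<gamma> (a i) (b i))" for \<gamma>
    by (simp add: tens_eval_conv_sum I_def a_def b_def)
  obtain T where T: "T \<subseteq> a ` I" "independent T" "a ` I \<subseteq> span T"
    using maximal_independent_subset[of "a ` I"] by blast
  have fin: "finite T" using T(1) finite_subset by (auto simp: I_def)
  have "\<exists>u. a i = (\<Sum>e\<in>T. u e *s e)" if "i \<in> I" for i
    using T(3) that span_finite[OF fin] by auto
  then obtain r where r: "\<And>i. i \<in> I \<Longrightarrow> a i = (\<Sum>e\<in>T. r i e *s e)" by metis
  define c where "c e = (\<Sum>i\<in>I. r i e *s b i)" for e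
  have "c e = 0" if "e \<in> T" for e
  proof -
    have "pair v (c e) = 0" for v
    proof -
      define y where "y = (\<Sum>i\<in>I. pair v (b i) *s a i)"
      have "pair u y = 0" for u
        using l[of u v] by (simp add: y_def eval P.B_simps mult.commute)
      then have "y = 0" using nd by blast
      moreover have "y = (\<Sum>e\<in>T. pair v (c e) *s e)"
        unfolding y_def c_def using r
        by (simp add: P.B_simps scale_sum_right scale_sum_left sum.swap[of _ I T] mult.commute)
      ultimately show ?thesis using independent_coefficients_eq_0[OF fin T(2)] that by metis
    qed
    then show ?thesis using nd by blast
  qed
  moreover have "tens_eval \<beta> l = (\<Sum>e\<in>T. \<beta> e (c e))"
    unfolding eval c_def using r by (simp add: \<beta>.B_simps sum.swap[of _ I T])
  ultimately show ?thesis by simp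
qed

lemma tens_eq_of_pairing:
  assumes pair: "bilinear_form scale pair" and nd: "\<And>y. \<forall>x. pair x y = 0 \<Longrightarrow> y = 0"
    and eq: "\<And>u v. tens_eval (\<lambda>a b. pair u a * pair v b) l1 = tens_eval (\<lambda>a b. pair u a * pair v b) l2"
  shows "tens_eq scale l1 l2"
proof -
  define l2' where "l2' = map (\<lambda>(a, b). (- a, b)) l2"
  have neg: "tens_eval \<gamma> l2' = - tens_eval \<gamma> l2" if "bilinear_form scale \<gamma>" for \<gamma>
  proof -
    interpret bilinear_space scale \<gamma> by unfold_locales (rule that)
    show ?thesis unfolding l2'_def tens_eval_def
      by (induction l2) (auto simp: B_simps)
  qed
  show ?thesis unfolding tens_eq_def
  proof (intro allI impI)
    fix \<beta> assume \<beta>: "bilinear_form scale \<beta>"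
    have "tens_eval \<beta> (l1 @ l2') = 0"
      using tens_eval_eq_0_of_pairing[OF pair nd, of "l1 @ l2'" \<beta>] \<beta> eq
      by (simp add: tens_eval_append neg[OF bilinear_form_product[OF pair]])
    then show "tens_eval \<beta> l1 = tens_eval \<beta> l2" by (simp add: tens_eval_append neg[OF \<beta>])
  qed
qed

end

section \<open>Primitives as the orthogonal of the decomposables\<close>

locale graded_hopf_pairing =
  fixes scale :: "'k::field \<Rightarrow> 'h::ab_group_add \<Rightarrow> 'h"
    and Hn :: "nat \<Rightarrow> 'h set" and mult :: "'h \<Rightarrow> 'h \<Rightarrow> 'h" and one :: 'h
    and Delta :: "'h \<Rightarrow> ('h \<times> 'h) list" and eps :: "'h \<Rightarrow> 'k"
    and pair :: "'h \<Rightarrow> 'h \<Rightarrow> 'k"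
  assumes hopf: "graded_connected_hopf scale Hn mult one Delta eps"
    and pairing: "hopf_pairing scale Hn mult one Delta eps pair"
    and symmetric: "symmetric_form pair"
    and nondegenerate: "nondegenerate_form pair"
begin

sublocale vector_space scale
  using hopf by (simp add: graded_connected_hopf_def)

sublocale pair: bilinear_space scale pair
  using pairing by unfold_locales (simp add: hopf_pairing_def)

lemma Hn_subspace: "subspace (Hn i)"
  and Hn_finite_span: "\<exists>E. finite E \<and> Hn i = span E"
  and homogeneous_decomposition: "\<exists>N f. (\<forall>i. f i \<in> Hn i) \<and> x = (\<Sum>i<N. f i)"
  and Hn_0: "Hn 0 = range (\<lambda>c. scale c one)"
  and mult_add_left: "mult (x + y) z = mult x z + mult y z"
  and mult_add_right: "mult x (y + z) = mult x y + mult x z"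
  and mult_scale_left: "mult (scale c x) y = scale c (mult x y)"
  and mult_scale_right: "mult x (scale c y) = scale c (mult x y)"
  and mult_one_left: "mult one x = x"
  and mult_one_right: "mult x one = x"
  and mult_Hn: "x \<in> Hn i \<Longrightarrow> y \<in> Hn j \<Longrightarrow> mult x y \<in> Hn (i + j)"
  and eps_linear: "Vector_Spaces.linear scale (*) eps"
  and eps_Hn: "i \<noteq> 0 \<Longrightarrow> x \<in> Hn i \<Longrightarrow> eps x = 0"
  and eps_one: "eps one = 1"
  using hopf unfolding graded_connected_hopf_def by (elim conjE; metis)+

lemma pair_one_right: "pair x one = eps x"
  and pair_one_left: "pair one x = eps x"
  and pair_mult_left: "pair (mult x y) z = tens_eval (\<lambda>a b. pair x a * pair y b) (Delta z)"
  and pair_Hn: "i \<noteq> j \<Longrightarrow> x \<in> Hn i \<Longrightarrow> y \<in> Hn j \<Longrightarrow> pair x y = 0"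
  using pairing unfolding hopf_pairing_def by (elim conjE; metis)+

lemma pair_symmetric: "pair x y = pair y x"
  using symmetric by (simp add: symmetric_form_def)

lemma pair_nondegenerate: "\<forall>x. pair x y = 0 \<Longrightarrow> y = 0"
  using nondegenerate by (simp add: nondegenerate_form_def)

sublocale mult_left: Vector_Spaces.linear scale scale "\<lambda>x. mult x y" for y
  by (simp add: Vector_Spaces.linear_iff vector_space_axioms mult_add_left mult_scale_left)

sublocale mult_right: Vector_Spaces.linear scale scale "mult x" for x
  by (simp add: Vector_Spaces.linear_iff vector_space_axioms mult_add_right mult_scale_right)

sublocale eps: Vector_Spaces.linear scale "(*)" eps
  by (rule eps_linear)

lemma pair_Hn_nondegenerate:
  assumes x: "x \<in> Hn n" "\<forall>y\<in>Hn n. pair y x = 0"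
  shows "x = 0"
proof (rule pair_nondegenerate, rule allI)
  fix y
  obtain N f where f: "\<forall>i. f i \<in> Hn i" "y = (\<Sum>i<N. f i)" using homogeneous_decomposition by blast
  have "pair (f i) x = 0" for i using x f(1) pair_Hn[of i n] by (cases "i = n") auto
  then show "pair y x = 0" by (simp add: f(2) pair.B_simps)
qed

lemma symmetric_form_space_Hn: "symmetric_form_space scale pair (Hn n)"
proof (intro symmetric_form_space.intro symmetric_form_space_axioms.intro)
  show "bilinear_space scale pair" by (rule pair.bilinear_space_axioms)
qed (fact pair_symmetric Hn_finite_span pair_Hn_nondegenerate)+

lemma eps_Hplus:
  assumes "x \<in> Hplus scale Hn" shows "eps x = 0"
proof (rule eps.eq_0_on_span)
  show "x \<in> span (\<Union>i\<in>{1..}. Hn i)" using assms unfolding Hplus_def .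
  fix z assume "z \<in> (\<Union>i\<in>{1..}. Hn i)"
  then obtain i where "i \<ge> 1" "z \<in> Hn i" by blast
  then show "eps z = 0" using eps_Hn[of i z] by simp
qed

lemma pair_Hplus2_primitive:
  assumes p: "p \<in> primitives scale one Delta" and q: "q \<in> Hplus2 scale Hn mult"
  shows "pair q p = 0"
proof -
  have "tens_eq scale (Delta p) [(p, one), (one, p)]" using p unfolding primitives_def by blast
  then have Delta_p: "tens_eval (\<lambda>a b. pair x a * pair y b) (Delta p)
      = tens_eval (\<lambda>a b. pair x a * pair y b) [(p, one), (one, p)]" for x y
    using bilinear_form_product[OF pair.bilinear] unfolding tens_eq_def by blast
  have "pair (mult x y) p = 0" if "x \<in> Hplus scale Hn" "y \<in> Hplus scale Hn" for x y
  proof -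
    have "pair (mult x y) p = tens_eval (\<lambda>a b. pair x a * pair y b) [(p, one), (one, p)]"
      unfolding pair_mult_left by (rule Delta_p)
    also have "\<dots> = pair x p * eps y + eps x * pair y p"
      by (simp add: tens_eval_def pair_one_right pair_one_left)
    finally show ?thesis using eps_Hplus that by simp
  qed
  then have "pair t p = 0" if "t \<in> {mult x y | x y. x \<in> Hplus scale Hn \<and> y \<in> Hplus scale Hn}" for t
    using that by blast
  moreover have "q \<in> span {mult x y | x y. x \<in> Hplus scale Hn \<and> y \<in> Hplus scale Hn}"
    using q unfolding Hplus2_def .
  ultimately show ?thesis by (rule pair.left.eq_0_on_span)
qed

lemma pair_mult_homogeneous_of_orth_Hplus2:
  assumes n: "n \<noteq> 0" and x: "x \<in> orth_in pair (Hn n) (Hplus2 scale Hn mult \<inter> Hn n)"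
    and uv: "u \<in> Hn i" "v \<in> Hn j"
  shows "pair (mult u v) x = pair u x * eps v + eps u * pair v x"
proof -
  have x_n: "x \<in> Hn n" and x_perp: "\<And>q. q \<in> Hplus2 scale Hn mult \<inter> Hn n \<Longrightarrow> pair q x = 0"
    using x by (auto simp: orth_in_def)
  have eps_x: "eps x = 0" using eps_Hn[OF n x_n] .
  consider "i = 0" | "j = 0" | "i \<noteq> 0" "j \<noteq> 0" by blast
  then show ?thesis
  proof cases
    case 1
    then obtain c where "u = scale c one" using uv(1) Hn_0 by blast
    then show ?thesis
      by (simp add: mult_scale_left mult_one_left pair.B_simps pair_one_left eps.scale eps_x eps_one)
  next
    case 2
    then obtain c where "v = scale c one" using uv(2) Hn_0 by blast
    then show ?thesis
      by (simp add: mult_scale_right mult_one_right pair.B_simps pair_one_left eps.scale eps_x eps_one)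
  next
    case 3
    have "pair (mult u v) x = 0"
    proof (cases "i + j = n")
      case True
      have "u \<in> (\<Union>i\<in>{1..}. Hn i)" "v \<in> (\<Union>i\<in>{1..}. Hn i)" using uv 3 by auto
      then have "u \<in> Hplus scale Hn" "v \<in> Hplus scale Hn"
        unfolding Hplus_def by (blast intro: span_base)+
      then have "mult u v \<in> Hplus2 scale Hn mult" unfolding Hplus2_def by (blast intro: span_base)
      then show ?thesis using x_perp mult_Hn[OF uv] True by blast
    next
      case False
      then show ?thesis using pair_Hn mult_Hn[OF uv] x_n by blast
    qed
    moreover have "eps u = 0" "eps v = 0" using eps_Hn 3 uv by auto
    ultimately show ?thesis by simp
  qed
qed

lemma pair_mult_of_orth_Hplus2:
  assumes n: "n \<noteq> 0" and x: "x \<in> orth_in pair (Hn n) (Hplus2 scale Hn mult \<inter> Hn n)"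
  shows "pair (mult u v) x = pair u x * eps v + eps u * pair v x"
proof -
  obtain N f where f: "\<forall>i. f i \<in> Hn i" "u = (\<Sum>i<N. f i)" using homogeneous_decomposition by blast
  obtain M g where g: "\<forall>j. g j \<in> Hn j" "v = (\<Sum>j<M. g j)" using homogeneous_decomposition by blast
  have "pair (mult u v) x = (\<Sum>i<N. \<Sum>j<M. pair (mult (f i) (g j)) x)"
    by (simp add: f(2) g(2) mult_left.sum mult_right.sum pair.B_simps sum.swap[of _ "{..<M}"])
  also have "\<dots> = (\<Sum>i<N. \<Sum>j<M. pair (f i) x * eps (g j) + eps (f i) * pair (g j) x)"
    using pair_mult_homogeneous_of_orth_Hplus2[OF n x f(1)[rule_format] g(1)[rule_format]] by simp
  also have "\<dots> = (\<Sum>i<N. pair (f i) x) * (\<Sum>j<M. eps (g j)) + (\<Sum>i<N. eps (f i)) * (\<Sum>j<M. pair (g j) x)"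
    by (simp add: sum.distrib sum_product)
  also have "\<dots> = pair u x * eps v + eps u * pair v x"
    by (simp add: f(2) g(2) pair.B_simps eps.sum)
  finally show ?thesis .
qed

lemma primitive_of_orth_Hplus2:
  assumes "n \<noteq> 0" "x \<in> orth_in pair (Hn n) (Hplus2 scale Hn mult \<inter> Hn n)"
  shows "x \<in> primitives scale one Delta"
  unfolding primitives_def mem_Collect_eq
proof (rule tens_eq_of_pairing[OF pair.bilinear pair_nondegenerate])
  show "tens_eval (\<lambda>a b. pair u a * pair v b) (Delta x)
      = tens_eval (\<lambda>a b. pair u a * pair v b) [(x, one), (one, x)]" for u v
    unfolding pair_mult_left[symmetric] using pair_mult_of_orth_Hplus2[OF assms, of u v]
    by (simp add: tens_eval_def pair_one_right pair_one_left)
qed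

theorem orth_Hplus2_eq_primitives:
  assumes "n \<noteq> 0"
  shows "orth_in pair (Hn n) (Hplus2 scale Hn mult \<inter> Hn n) = primitives scale one Delta \<inter> Hn n"
proof (intro equalityI subsetI)
  show "x \<in> primitives scale one Delta \<inter> Hn n"
    if "x \<in> orth_in pair (Hn n) (Hplus2 scale Hn mult \<inter> Hn n)" for x
    using primitive_of_orth_Hplus2[OF assms that] that by (simp add: orth_in_def)
  show "x \<in> orth_in pair (Hn n) (Hplus2 scale Hn mult \<inter> Hn n)"
    if "x \<in> primitives scale one Delta \<inter> Hn n" for x
    using pair_Hplus2_primitive that by (simp add: orth_in_def)
qed

end

theorem lemma3:
  fixes scale :: "'k::field \<Rightarrow> 'h::ab_group_add \<Rightarrow> 'h"
    and Hn :: "nat \<Rightarrow> 'h set" and mult :: "'h \<Rightarrow> 'h \<Rightarrow> 'h" and one :: 'h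
    and Delta :: "'h \<Rightarrow> ('h \<times> 'h) list" and eps :: "'h \<Rightarrow> 'k"
    and pair :: "'h \<Rightarrow> 'h \<Rightarrow> 'k"
    and n :: nat and hn mn :: "'h set"
  assumes char: "(2::'k) \<noteq> 0"
    and H: "graded_connected_hopf scale Hn mult one Delta eps"
    and P: "hopf_pairing scale Hn mult one Delta eps pair"
    and sym: "symmetric_form pair"
    and nondeg: "nondegenerate_form pair"
    and n: "n \<ge> 1"
    and hn: "is_complement scale hn (primitives scale one Delta \<inter> Hplus2 scale Hn mult \<inter> Hn n)
                (primitives scale one Delta \<inter> Hn n)"
    and mn: "is_complement scale mn (primitives scale one Delta \<inter> Hplus2 scale Hn mult \<inter> Hn n)
                (Hplus2 scale Hn mult \<inter> Hn n)"
  shows "nondeg_on pair hn hn \<and>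
    (\<exists>wn. is_complement scale wn
             (sum2 (primitives scale one Delta \<inter> Hn n) (Hplus2 scale Hn mult \<inter> Hn n)) (Hn n) \<and>
      (let pn = primitives scale one Delta \<inter> Hplus2 scale Hn mult \<inter> Hn n in
        (orth_in pair (Hn n) wn = sum3 wn hn mn \<and> direct3 wn hn mn \<and> nondeg_on pair pn wn) \<and>
        (orth_in pair (Hn n) hn = sum3 pn mn wn \<and> direct3 pn mn wn \<and> nondeg_on pair hn hn) \<and>
        (orth_in pair (Hn n) mn = sum3 pn hn wn \<and> direct3 pn hn wn \<and> nondeg_on pair mn mn) \<and>
        (orth_in pair (Hn n) pn = sum3 pn mn hn \<and> direct3 pn mn hn \<and> nondeg_on pair wn pn)))"
proof -
  interpret graded_hopf_pairing scale Hn mult one Delta eps pair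
    using H P sym nondeg by unfold_locales
  interpret Hn: symmetric_form_space scale pair "Hn n" by (rule symmetric_form_space_Hn)
  let ?P = "primitives scale one Delta \<inter> Hn n" and ?Q = "Hplus2 scale Hn mult \<inter> Hn n"
  have orth_Q: "Hn.orth ?Q = ?P" using orth_Hplus2_eq_primitives n by simp
  have "subspace ?Q" unfolding Hplus2_def using Hn_subspace subspace_inter subspace_span by blast
  moreover have "subspace ?P" using Hn.subspace_orth orth_Q by metis
  moreover have inter: "?P \<inter> ?Q = primitives scale one Delta \<inter> Hplus2 scale Hn mult \<inter> Hn n"
    by blast
  ultimately show ?thesis
    using Hn.exists_complement_orthogonal_decomposition[OF char _ _ _ _ orth_Q] hn mn
    unfolding inter by blast
qed

end
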